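(* Let $n_1,n_2,n_3$ be integers with $3\le n_1,n_2\le n_3$ and $3\max(n_1,n_2)\le 2n_3\le n_1n_2$. For every set $W$ produced by the Middle Cone Construction described below, the landmark graph $\mathcal{G}(W)$ contains no bad $4$-cycle.
   Context: For a vertex set $W$ of $K_{n_1}\times K_{n_2}\times K_{n_3}$ (vertices are triples $(x_1,x_2,x_3)$, $1\le x_i\le n_i$), $W_{i,a}=\{w\in W:w_i=a\}$; the landmark graph $\mathcal{G}(W)$ is the hypergraph on $W$ whose hyperedges are the nonempty $W_{i,a}$, colored $i$. Bad $4$-cycle: distinct $w_1,\dots,w_4\in W$ and $\{i,j,k\}=\{1,2,3\}$ such that $\{w_1,w_2\}$ and $\{w_3,w_4\}$ are hyperedges of color $i$, $w_2,w_3$ lie in a common hyperedge of color $j$, and $w_4,w_1$ lie in a common hyperedge of color $k$. Multiplicities: write $n_3=qn_1+r$, $0\le r\le n_1-1$. If $r\le n_1-r$, $(\ell_1,\dots,\ell_{n_1})$ is $(q+1,q)$ repeated $r$ times followed by $n_1-2r$ copies of $q$; if $r>n_1-r$, it is $(q+1,q)$ repeated $n_1-r$ times followed by $2r-n_1$ copies of $q+1$. Let $L_i=\sum_{j<i}\ell_j$; block $i$ is the set of columns $c$ with $L_i<c\le L_i+\ell_i$; $s_i=L_i+1$. Middle Cone Construction: $W=W^L\cup W^R$, each consisting of $n_3$ landmarks indexed by columns $c=1,\dots,n_3$. Left column $c$ in block $i$ is $(i,y^L_c,c)$; right column $c$ in block $i$ is $(i+1,y^R_c,c)$ with $n_1+1$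 read as $1$. Even $n_2$, $h=n_2/2$: $y^L_c=((c-1)\bmod h)+1$, $y^R_c=h+((c-1)\bmod h)+1$. Odd $n_2$, $f=(n_2-1)/2$, $k=\#\{i:\ell_i>f\}$: let $S=\{s_i:\ell_i>f\}$ if $k\ge2$ and $S=\{1\}$ if $k\le1$. Set $y^L_c=n_2$ for $c\in S$ and fill the other left columns in increasing order with $1,\dots,f,1,\dots,f,\dots$; set $y^R_c=n_2$ for $c\in S+1$ and fill the other right columns in increasing order with $f+1,\dots,2f,f+1,\dots,2f,\dots$. If $k\le1$, additionally change one left landmark of the form $(x,1,z)$ with $x\notin\{1,2,n_1\}$ to $(x,n_2,z)$ (any such choice). *)

theory Defs
  imports Main
begin

type_synonym vertex = "nat \<times> nat \<times> nat"

definition coord :: "nat \<Rightarrow> vertex \<Rightarrow> nat" where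
  "coord i w = (if i = 1 then fst w else if i = 2 then fst (snd w) else snd (snd w))"

definition Wsec :: "vertex set \<Rightarrow> nat \<Rightarrow> nat \<Rightarrow> vertex set" where
  "Wsec W i a = {w \<in> W. coord i w = a}"

text \<open>Colored hyperedges of the landmark graph: pairs (color, hyperedge).\<close>
definition hyperedges :: "vertex set \<Rightarrow> (nat \<times> vertex set) set" where
  "hyperedges W = {(i, Wsec W i a) | i a. i \<in> {1,2,3} \<and> Wsec W i a \<noteq> {}}"

definition has_bad_4cycle :: "vertex set \<Rightarrow> bool" where
  "has_bad_4cycle W \<longleftrightarrow>
     (\<exists>w1 w2 w3 w4 i j k.
        w1 \<in> W \<and> w2 \<in> W \<and> w3 \<in> W \<and> w4 \<in> W \<and>
        distinct [w1, w2, w3, w4] \<and>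
        {i, j, k} = {1, 2, 3::nat} \<and>
        (i, {w1, w2}) \<in> hyperedges W \<and> (i, {w3, w4}) \<in> hyperedges W \<and>
        (\<exists>e. (j, e) \<in> hyperedges W \<and> w2 \<in> e \<and> w3 \<in> e) \<and>
        (\<exists>e. (k, e) \<in> hyperedges W \<and> w4 \<in> e \<and> w1 \<in> e))"

definition ell :: "nat \<Rightarrow> nat \<Rightarrow> nat \<Rightarrow> nat" where
  "ell n1 n3 j =
     (let q = n3 div n1; r = n3 mod n1 in
      if r \<le> n1 - r then (if j \<le> 2 * r \<and> odd j then q + 1 else q)
      else (if j \<le> 2 * (n1 - r) then (if odd j then q + 1 else q) else q + 1))"

definition Lsum :: "nat \<Rightarrow> nat \<Rightarrow> nat \<Rightarrow> nat" where
  "Lsum n1 n3 i = (\<Sum>j\<in>{1..<i}. ell n1 n3 j)"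

definition sfirst :: "nat \<Rightarrow> nat \<Rightarrow> nat \<Rightarrow> nat" where
  "sfirst n1 n3 i = Lsum n1 n3 i + 1"

definition in_block :: "nat \<Rightarrow> nat \<Rightarrow> nat \<Rightarrow> nat \<Rightarrow> bool" where
  "in_block n1 n3 i c \<longleftrightarrow> Lsum n1 n3 i < c \<and> c \<le> Lsum n1 n3 i + ell n1 n3 i"

definition left_set :: "nat \<Rightarrow> nat \<Rightarrow> (nat \<Rightarrow> nat) \<Rightarrow> vertex set" where
  "left_set n1 n3 yL = {(i, yL c, c) | i c. 1 \<le> i \<and> i \<le> n1 \<and> 1 \<le> c \<and> c \<le> n3 \<and> in_block n1 n3 i c}"

definition right_set :: "nat \<Rightarrow> nat \<Rightarrow> (nat \<Rightarrow> nat) \<Rightarrow> vertex set" where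
  "right_set n1 n3 yR = {(if i = n1 then 1 else i + 1, yR c, c) | i c.
      1 \<le> i \<and> i \<le> n1 \<and> 1 \<le> c \<and> c \<le> n3 \<and> in_block n1 n3 i c}"

definition yL_even :: "nat \<Rightarrow> nat \<Rightarrow> nat" where
  "yL_even n2 c = ((c - 1) mod (n2 div 2)) + 1"

definition yR_even :: "nat \<Rightarrow> nat \<Rightarrow> nat" where
  "yR_even n2 c = n2 div 2 + ((c - 1) mod (n2 div 2)) + 1"

definition fpar :: "nat \<Rightarrow> nat" where "fpar n2 = (n2 - 1) div 2"

definition kcount :: "nat \<Rightarrow> nat \<Rightarrow> nat \<Rightarrow> nat" where
  "kcount n1 n2 n3 = card {i \<in> {1..n1}. ell n1 n3 i > fpar n2}"

definition Sset :: "nat \<Rightarrow> nat \<Rightarrow> nat \<Rightarrow> nat set" where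
  "Sset n1 n2 n3 = (if kcount n1 n2 n3 \<ge> 2
      then {sfirst n1 n3 i | i. i \<in> {1..n1} \<and> ell n1 n3 i > fpar n2} else {1})"

text \<open>Non-special columns (those not in T) are filled in increasing order with
  base+1, ..., base+f, base+1, ...: the m-th such column gets base + ((m-1) mod f) + 1.\<close>
definition fill_odd :: "nat \<Rightarrow> nat set \<Rightarrow> nat \<Rightarrow> nat \<Rightarrow> nat" where
  "fill_odd n2 T base c =
     (if c \<in> T then n2
      else base + ((card {c' \<in> {1..c}. c' \<notin> T} - 1) mod fpar n2) + 1)"

definition yL_odd :: "nat \<Rightarrow> nat \<Rightarrow> nat \<Rightarrow> nat \<Rightarrow> nat" where
  "yL_odd n1 n2 n3 c = fill_odd n2 (Sset n1 n2 n3) 0 c"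

definition yR_odd :: "nat \<Rightarrow> nat \<Rightarrow> nat \<Rightarrow> nat \<Rightarrow> nat" where
  "yR_odd n1 n2 n3 c = fill_odd n2 ((\<lambda>s. s + 1) ` Sset n1 n2 n3) (fpar n2) c"

text \<open>All sets W produced by the Middle Cone Construction (several if a choice is made).\<close>
definition middle_cone :: "nat \<Rightarrow> nat \<Rightarrow> nat \<Rightarrow> vertex set set" where
  "middle_cone n1 n2 n3 =
     (if even n2 then {left_set n1 n3 (yL_even n2) \<union> right_set n1 n3 (yR_even n2)}
      else if kcount n1 n2 n3 \<ge> 2 then
        {left_set n1 n3 (yL_odd n1 n2 n3) \<union> right_set n1 n3 (yR_odd n1 n2 n3)}
      else
        {insert (x, n2, z) (left_set n1 n3 (yL_odd n1 n2 n3) - {(x, 1, z)})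
           \<union> right_set n1 n3 (yR_odd n1 n2 n3) | x z.
           (x, 1, z) \<in> left_set n1 n3 (yL_odd n1 n2 n3) \<and> x \<notin> {1, 2, n1}})"

end

theory Submission
  imports Defs
begin

text \<open>Every column \<open>c\<close> carries exactly two landmarks, a left one \<open>(i, y\<^sup>L\<^sub>c, c)\<close> and a right one
  \<open>(i + 1, y\<^sup>R\<^sub>c, c)\<close>, where \<open>i\<close> is the block of \<open>c\<close>; so the hyperedges of colour 3 are exactly these
  column pairs. Every hyperedge of colour 1 or 2 has at least three elements: row \<open>a\<close> meets
  \<open>\<ell>\<^sub>a + \<ell>\<^sub>a\<^sub>-\<^sub>1 \<ge> 3\<close> landmarks, and every second coordinate is taken in at least three columns.
  This is where the numerical hypotheses enter. Hence the two 2-element hyperedges of a bad 4-cycle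
  are column pairs, and its links of colours 1 and 2 force either two columns of one block with
  equal left (or equal right) values, or columns \<open>c, c'\<close>, the block of \<open>c\<close> following that of \<open>c'\<close>,
  with \<open>y\<^sup>R\<^sub>c = y\<^sup>L\<^sub>c\<^sub>'\<close>. The values exclude both: on each side they run cyclically through \<open>h\<close>
  (resp. \<open>f\<close>) values and a block has at most that many columns, except for the long blocks of
  length \<open>f + 1\<close> when \<open>n\<^sub>2\<close> is odd, whose first (left) and second (right) columns get the value
  \<open>n\<^sub>2\<close> instead; left and right values lie in disjoint ranges apart from \<open>n\<^sub>2\<close>, and the columns
  carrying \<open>n\<^sub>2\<close> on the right never lie in the block following one carrying it on the left.\<close>

section \<open>Landmark graphs made of column pairs\<close>

lemma coord_simps [simp]:
  "coord 1 (x, y, z) = x" "coord (Suc 0) (x, y, z) = x" "coord 2 (x, y, z) = y" "coord 3 (x, y, z) = z"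
  unfolding coord_def by auto

lemma hyperedge_coord_eq:
  "(i, e) \<in> hyperedges W \<Longrightarrow> u \<in> e \<Longrightarrow> v \<in> e \<Longrightarrow> coord i u = coord i v"
  unfolding hyperedges_def Wsec_def by auto

lemma two_element_hyperedge_colour:
  assumes "(i, {u, v}) \<in> hyperedges W" "u \<noteq> v"
    and rich: "\<And>w i. w \<in> W \<Longrightarrow> i \<in> {1, 2} \<Longrightarrow> 3 \<le> card (Wsec W i (coord i w))"
  shows "i = 3"
proof -
  obtain a where a: "Wsec W i a = {u, v}" "i \<in> {1, 2, 3}"
    using assms(1) unfolding hyperedges_def by auto
  then have "u \<in> W" "coord i u = a" unfolding Wsec_def by blast+
  moreover have "card (Wsec W i a) = 2" using a(1) assms(2) by simp
  ultimately show ?thesis using rich a(2) by fastforce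
qed

lemma no_bad_4cycle_column_pairs:
  fixes C :: "nat set" and b nx yL yR :: "nat \<Rightarrow> nat"
  defines "W \<equiv> (\<lambda>c. (b c, yL c, c)) ` C \<union> (\<lambda>c. (nx (b c), yR c, c)) ` C"
  assumes nx_inj: "\<And>c c'. c \<in> C \<Longrightarrow> c' \<in> C \<Longrightarrow> nx (b c) = nx (b c') \<Longrightarrow> b c = b c'"
    and rich: "\<And>w i. w \<in> W \<Longrightarrow> i \<in> {1, 2} \<Longrightarrow> 3 \<le> card (Wsec W i (coord i w))"
    and same_block: "\<And>c c'. c \<in> C \<Longrightarrow> c' \<in> C \<Longrightarrow> c \<noteq> c' \<Longrightarrow> b c = b c' \<Longrightarrow>
      yL c \<noteq> yL c' \<and> yR c \<noteq> yR c'"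
    and next_block: "\<And>c c'. c \<in> C \<Longrightarrow> c' \<in> C \<Longrightarrow> b c = nx (b c') \<Longrightarrow> yR c \<noteq> yL c'"
  shows "\<not> has_bad_4cycle W"
proof
  define Lm where "Lm c = (b c, yL c, c)" for c
  define Rm where "Rm c = (nx (b c), yR c, c)" for c
  have column_pair: "\<exists>c\<in>C. {u, v} = {Lm c, Rm c}"
    if "u \<in> W" "v \<in> W" "u \<noteq> v" "coord 3 u = coord 3 v" for u v
    using that unfolding W_def Lm_def Rm_def by auto
  assume "has_bad_4cycle W"
  then obtain w1 w2 w3 w4 i j k e e' where
    ws: "w1 \<in> W" "w2 \<in> W" "w3 \<in> W" "w4 \<in> W" and d: "distinct [w1, w2, w3, w4]"
    and ijk: "{i, j, k} = {1, 2, 3::nat}"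
    and h12: "(i, {w1, w2}) \<in> hyperedges W" and h34: "(i, {w3, w4}) \<in> hyperedges W"
    and e: "(j, e) \<in> hyperedges W" "w2 \<in> e" "w3 \<in> e"
    and e': "(k, e') \<in> hyperedges W" "w4 \<in> e'" "w1 \<in> e'"
    unfolding has_bad_4cycle_def by blast
  have i: "i = 3" using two_element_hyperedge_colour[OF h12] d rich by simp
  have "j \<in> {1, 2, 3}" "k \<in> {1, 2, 3}" "1 \<in> {i, j, k}" "2 \<in> {i, j, k}"
    using ijk by blast+
  then have jk: "(j = 1 \<and> k = 2) \<or> (j = 2 \<and> k = 1)" using i by auto
  obtain c where c: "c \<in> C" "{w1, w2} = {Lm c, Rm c}"
    using column_pair[OF ws(1,2)] hyperedge_coord_eq[OF h12] d i by auto
  obtain c' where c': "c' \<in> C" "{w3, w4} = {Lm c', Rm c'}"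
    using column_pair[OF ws(3,4)] hyperedge_coord_eq[OF h34] d i by auto
  have "c \<noteq> c'" using c c' d by auto
  have j: "coord j w2 = coord j w3" and k: "coord k w4 = coord k w1"
    using hyperedge_coord_eq[OF e(1)] e hyperedge_coord_eq[OF e'(1)] e' by blast+
  have w12: "(w1 = Lm c \<and> w2 = Rm c) \<or> (w1 = Rm c \<and> w2 = Lm c)"
    and w34: "(w3 = Lm c' \<and> w4 = Rm c') \<or> (w3 = Rm c' \<and> w4 = Lm c')"
    using c(2) c'(2) d by (auto simp: doubleton_eq_iff)
  show False
    using jk w12 w34 j k same_block[OF c(1) c'(1) \<open>c \<noteq> c'\<close>]
      next_block[OF c(1) c'(1)] next_block[OF c'(1) c(1)] nx_inj[OF c(1) c'(1)]
    unfolding Lm_def Rm_def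
    by (elim disjE conjE) (simp_all only: coord_simps prod.inject, simp_all)
qed

lemma three_le_card_Wsec:
  assumes "finite W" "{u1, u2, u3} \<subseteq> W" "distinct [coord 3 u1, coord 3 u2, coord 3 u3]"
    and "coord i u1 = a" "coord i u2 = a" "coord i u3 = a"
  shows "3 \<le> card (Wsec W i a)"
proof -
  have sub: "{u1, u2, u3} \<subseteq> Wsec W i a" using assms(2,4-6) unfolding Wsec_def by blast
  have fin: "finite (Wsec W i a)" using assms(1) unfolding Wsec_def by simp
  have "distinct [u1, u2, u3]" using assms(3) by auto
  then have "card {u1, u2, u3} = 3" using distinct_card[of "[u1, u2, u3]"] by simp
  then show ?thesis using card_mono[OF fin sub] by simp
qed

section \<open>Blocks\<close>

lemma ell_altdef:
  "ell n1 n3 j = n3 div n1 +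
     (if n3 mod n1 \<le> n1 - n3 mod n1 then (if j \<le> 2 * (n3 mod n1) \<and> odd j then 1 else 0)
      else (if j \<le> 2 * (n1 - n3 mod n1) then (if odd j then 1 else 0) else 1))"
  unfolding ell_def Let_def by auto

lemma Lsum_Suc: "1 \<le> i \<Longrightarrow> Lsum n1 n3 (Suc i) = Lsum n1 n3 i + ell n1 n3 i"
  unfolding Lsum_def by (simp add: atLeastLessThanSuc)

lemma Lsum_mono: "i \<le> j \<Longrightarrow> Lsum n1 n3 i \<le> Lsum n1 n3 j"
  unfolding Lsum_def by (rule sum_mono2) auto

text \<open>The number of indices \<open>1 \<le> j < i\<close> with \<open>\<ell>\<^sub>j = q + 1\<close>, where \<open>r = n\<^sub>3 mod n\<^sub>1\<close>.\<close>
definition ell_excess :: "nat \<Rightarrow> nat \<Rightarrow> nat \<Rightarrow> nat" where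
  "ell_excess n1 r i = (if r \<le> n1 - r then min (i div 2) r
     else if i \<le> 2 * (n1 - r) + 1 then i div 2 else (n1 - r) + (i - 1 - 2 * (n1 - r)))"

lemma ell_excess_Suc_Suc:
  "ell_excess n1 r (Suc (Suc i)) = ell_excess n1 r (Suc i) +
     (if r \<le> n1 - r then (if Suc i \<le> 2 * r \<and> odd (Suc i) then 1 else 0)
      else (if Suc i \<le> 2 * (n1 - r) then (if odd (Suc i) then 1 else 0) else 1))"
proof -
  obtain t where t: "Suc i = 2 * t \<or> Suc i = 2 * t + 1" by (metis odd_two_times_div_two_succ dvdE)
  then show ?thesis
  proof
    assume "Suc i = 2 * t"
    then have "Suc i div 2 = t" "Suc (Suc i) div 2 = t" "\<not> odd (Suc i)" by auto
    then show ?thesis unfolding ell_excess_def using \<open>Suc i = 2 * t\<close> by auto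
  next
    assume "Suc i = 2 * t + 1"
    then have "Suc i div 2 = t" "Suc (Suc i) div 2 = t + 1" "odd (Suc i)" by auto
    then show ?thesis unfolding ell_excess_def using \<open>Suc i = 2 * t + 1\<close> by auto
  qed
qed

lemma Lsum_Suc_eq: "Lsum n1 n3 (Suc i) = n3 div n1 * i + ell_excess n1 (n3 mod n1) (Suc i)"
proof (induction i)
  case 0
  then show ?case by (simp add: ell_excess_def Lsum_def)
next
  case (Suc i)
  have "Lsum n1 n3 (Suc (Suc i)) = Lsum n1 n3 (Suc i) + ell n1 n3 (Suc i)"
    by (simp add: Lsum_Suc)
  also have "\<dots> = n3 div n1 * Suc i + ell_excess n1 (n3 mod n1) (Suc (Suc i))"
    using Suc ell_excess_Suc_Suc[of n1 "n3 mod n1" i] ell_altdef[of n1 n3 "Suc i"] by simp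
  finally show ?case .
qed

lemma Lsum_total:
  assumes "0 < n1" shows "Lsum n1 n3 (Suc n1) = n3"
proof -
  have r: "n3 mod n1 < n1" using assms by simp
  have "ell_excess n1 (n3 mod n1) (Suc n1) = n3 mod n1"
  proof (cases "n3 mod n1 \<le> n1 - n3 mod n1")
    case False
    then have "\<not> Suc n1 \<le> 2 * (n1 - n3 mod n1) + 1"
      and "n1 - n3 mod n1 + (Suc n1 - 1 - 2 * (n1 - n3 mod n1)) = n3 mod n1"
      using r by linarith+
    then show ?thesis using False unfolding ell_excess_def by simp
  qed (simp add: ell_excess_def)
  then show ?thesis using Lsum_Suc_eq[of n1 n3 n1] by (simp add: mult.commute)
qed

definition block_of :: "nat \<Rightarrow> nat \<Rightarrow> nat \<Rightarrow> nat" where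
  "block_of n1 n3 c = (THE i. 1 \<le> i \<and> i \<le> n1 \<and> in_block n1 n3 i c)"

lemma in_block_range:
  assumes "1 \<le> i" "i \<le> n1" "in_block n1 n3 i c" shows "1 \<le> c" "c \<le> n3"
proof -
  show "1 \<le> c" using assms(3) unfolding in_block_def by simp
  have "Lsum n1 n3 (Suc i) \<le> Lsum n1 n3 (Suc n1)" using assms by (intro Lsum_mono) simp
  then show "c \<le> n3"
    using assms Lsum_Suc[of i n1 n3] Lsum_total[of n1 n3] unfolding in_block_def by simp
qed

lemma in_block_unique:
  assumes "1 \<le> i" "in_block n1 n3 i c" "1 \<le> j" "in_block n1 n3 j c" shows "i = j"
proof -
  have False if "1 \<le> a" "a < b" "in_block n1 n3 a c" "in_block n1 n3 b c" for a b
  proof -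
    have "Lsum n1 n3 (Suc a) \<le> Lsum n1 n3 b" using that by (intro Lsum_mono) simp
    then show False using that Lsum_Suc[of a n1 n3] unfolding in_block_def by simp
  qed
  then show ?thesis using assms by (metis linorder_neqE_nat)
qed

lemma in_block_exists:
  assumes "0 < n1" "1 \<le> c" "c \<le> n3" shows "\<exists>i. 1 \<le> i \<and> i \<le> n1 \<and> in_block n1 n3 i c"
proof -
  have "\<exists>i. 1 \<le> i \<and> i \<le> m \<and> in_block n1 n3 i c" if "c \<le> Lsum n1 n3 (Suc m)" for m
    using that
  proof (induction m)
    case (Suc m)
    show ?case
    proof (cases "c \<le> Lsum n1 n3 (Suc m)")
      case True
      then show ?thesis using Suc.IH le_SucI by blast
    next
      case False
      then show ?thesis using Suc.prems Lsum_Suc[of "Suc m" n1 n3] unfolding in_block_def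
        by (intro exI[of _ "Suc m"]) auto
    qed
  qed (use assms in \<open>simp add: Lsum_def\<close>)
  then show ?thesis using assms Lsum_total[of n1 n3] by simp
qed

lemma block_of_eq:
  "1 \<le> i \<Longrightarrow> i \<le> n1 \<Longrightarrow> in_block n1 n3 i c \<Longrightarrow> block_of n1 n3 c = i"
  unfolding block_of_def using in_block_unique by blast

lemma block_of:
  assumes "0 < n1" "1 \<le> c" "c \<le> n3"
  shows "1 \<le> block_of n1 n3 c" "block_of n1 n3 c \<le> n1" "in_block n1 n3 (block_of n1 n3 c) c"
  using in_block_exists[OF assms] block_of_eq by metis+

definition cyc_succ :: "nat \<Rightarrow> nat \<Rightarrow> nat" where
  "cyc_succ n i = (if i = n then 1 else i + 1)"

lemma block_indexed_set_eq_image: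
  assumes "0 < n1"
  shows "{(g i, y c, c) | i c. 1 \<le> i \<and> i \<le> n1 \<and> 1 \<le> c \<and> c \<le> n3 \<and> in_block n1 n3 i c}
    = (\<lambda>c. (g (block_of n1 n3 c), y c, c)) ` {1..n3}" (is "?A = ?B")
proof (intro equalityI subsetI)
  fix x assume "x \<in> ?A"
  then obtain i c where "x = (g i, y c, c)" "1 \<le> i" "i \<le> n1" "c \<in> {1..n3}" "in_block n1 n3 i c"
    by auto
  then show "x \<in> ?B" using block_of_eq[of i n1 n3 c] by auto
next
  fix x assume "x \<in> ?B"
  then obtain c where "x = (g (block_of n1 n3 c), y c, c)" "1 \<le> c" "c \<le> n3" by auto
  then show "x \<in> ?A" using block_of[OF assms] by blast
qed

lemma left_set_eq_image:
  "0 < n1 \<Longrightarrow> left_set n1 n3 yL = (\<lambda>c. (block_of n1 n3 c, yL c, c)) ` {1..n3}"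
  using block_indexed_set_eq_image[of n1 "\<lambda>i. i"] unfolding left_set_def by simp

lemma right_set_eq_image:
  assumes "0 < n1"
  shows "right_set n1 n3 yR = (\<lambda>c. (cyc_succ n1 (block_of n1 n3 c), yR c, c)) ` {1..n3}"
proof -
  have "right_set n1 n3 yR = {(cyc_succ n1 i, yR c, c) | i c.
      1 \<le> i \<and> i \<le> n1 \<and> 1 \<le> c \<and> c \<le> n3 \<and> in_block n1 n3 i c}"
    unfolding right_set_def cyc_succ_def ..
  then show ?thesis using block_indexed_set_eq_image[OF assms] by (rule trans)
qed

lemma left_set_fun_upd:
  assumes "0 < n1" "(x, y, z) \<in> left_set n1 n3 yL"
  shows "insert (x, v, z) (left_set n1 n3 yL - {(x, y, z)}) = left_set n1 n3 (yL(z := v))"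
  using assms(2) unfolding left_set_eq_image[OF assms(1)] by force

lemma cyc_succ_range: "1 \<le> i \<Longrightarrow> i \<le> n \<Longrightarrow> 1 \<le> cyc_succ n i \<and> cyc_succ n i \<le> n"
  unfolding cyc_succ_def by auto

lemma cyc_succ_inj:
  "1 \<le> i \<Longrightarrow> i \<le> n \<Longrightarrow> 1 \<le> j \<Longrightarrow> j \<le> n \<Longrightarrow> cyc_succ n i = cyc_succ n j \<Longrightarrow> i = j"
  unfolding cyc_succ_def by (cases "i = n"; cases "j = n") simp_all

definition cyc_pred :: "nat \<Rightarrow> nat \<Rightarrow> nat" where
  "cyc_pred n i = (if i = 1 then n else i - 1)"

section \<open>Values filled in cyclically\<close>

lemma mod_eq_close_imp_eq:
  fixes x y h :: nat
  assumes "x \<le> y" "y < x + h" "x mod h = y mod h" shows "x = y"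
proof -
  have "h dvd y - x" using mod_eq_dvd_iff_nat[OF assms(1), of h] assms(3) by simp
  moreover have "y - x < h" using assms(1,2) by linarith
  ultimately show ?thesis using assms(1) dvd_imp_le by fastforce
qed

definition unmarked_rank :: "nat set \<Rightarrow> nat \<Rightarrow> nat" where
  "unmarked_rank T c = card ({1..c} - T)"

lemma fill_odd_eq:
  "fill_odd n2 T base c = (if c \<in> T then n2 else base + (unmarked_rank T c - 1) mod fpar n2 + 1)"
proof -
  have "{c' \<in> {1..c}. c' \<notin> T} = {1..c} - T" by auto
  then show ?thesis unfolding fill_odd_def unmarked_rank_def by simp
qed

lemma unmarked_rank_add:
  assumes "c \<le> c'" shows "unmarked_rank T c' = unmarked_rank T c + card ({Suc c..c'} - T)"
proof -
  have "{1..c'} - T = ({1..c} - T) \<union> ({Suc c..c'} - T)" using assms by auto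
  then show ?thesis unfolding unmarked_rank_def by (simp add: card_Un_disjoint disjoint_iff)
qed

lemma unmarked_rank_pos: "1 \<le> c \<Longrightarrow> c \<notin> T \<Longrightarrow> 1 \<le> unmarked_rank T c"
  unfolding unmarked_rank_def by (metis DiffI atLeastAtMost_iff card_0_eq empty_iff finite_Diff
      finite_atLeastAtMost le_refl less_one not_le)

lemma unmarked_rank_ge: "finite T \<Longrightarrow> n - card T \<le> unmarked_rank T n"
  unfolding unmarked_rank_def using diff_card_le_card_Diff[of T "{1..n}"] by simp

lemma unmarked_rank_surj:
  "1 \<le> m \<Longrightarrow> m \<le> unmarked_rank T n \<Longrightarrow> \<exists>c\<in>{1..n} - T. unmarked_rank T c = m"
proof (induction n)
  case 0
  then show ?case unfolding unmarked_rank_def by simp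
next
  case (Suc n)
  have "{Suc n..Suc n} - T = (if Suc n \<in> T then {} else {Suc n})" by auto
  then have step: "unmarked_rank T (Suc n) = unmarked_rank T n + (if Suc n \<in> T then 0 else 1)"
    using unmarked_rank_add[of n "Suc n" T] by simp
  show ?case
  proof (cases "m \<le> unmarked_rank T n")
    case True
    then show ?thesis using Suc by auto
  next
    case False
    then show ?thesis using Suc.prems step by (intro bexI[of _ "Suc n"]) (auto split: if_splits)
  qed
qed

lemma unmarked_rank_mod_neq:
  assumes "a < c" "c < c'" "c' \<le> b" "c \<notin> T" "c' \<notin> T" "card ({a<..b} - T) \<le> f"
  shows "(unmarked_rank T c - 1) mod f \<noteq> (unmarked_rank T c' - 1) mod f"
proof
  let ?d = "card ({Suc c..c'} - T)"
  have "c' \<in> {Suc c..c'} - T" using assms by simp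
  then have "1 \<le> ?d" by (metis One_nat_def Suc_leI card_gt_0_iff empty_iff finite_Diff finite_atLeastAtMost)
  have "{Suc c..c'} - T \<subseteq> ({a<..b} - T) - {c}" using assms by auto
  moreover have "c \<in> {a<..b} - T" using assms by simp
  ultimately have "?d \<le> card ({a<..b} - T) - 1"
    by (metis card_Diff_singleton card_mono finite_Diff finite_greaterThanAtMost)
  then have "?d < f" using assms(6) \<open>1 \<le> ?d\<close> by linarith
  moreover have "1 \<le> unmarked_rank T c" using assms by (intro unmarked_rank_pos) auto
  moreover have "unmarked_rank T c' = unmarked_rank T c + ?d"
    using assms by (intro unmarked_rank_add) simp
  ultimately have "unmarked_rank T c - 1 \<le> unmarked_rank T c' - 1"
    "unmarked_rank T c' - 1 < unmarked_rank T c - 1 + f"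
    "unmarked_rank T c - 1 \<noteq> unmarked_rank T c' - 1"
    using \<open>1 \<le> ?d\<close> by linarith+
  moreover assume "(unmarked_rank T c - 1) mod f = (unmarked_rank T c' - 1) mod f"
  ultimately show False using mod_eq_close_imp_eq by blast
qed

lemma card_unmarked_class_ge:
  assumes "t < f" "0 < K" "t + 1 + (K - 1) * f \<le> unmarked_rank T n"
  shows "K \<le> card {c \<in> {1..n} - T. (unmarked_rank T c - 1) mod f = t}"
    (is "_ \<le> card ?D")
proof -
  let ?M = "(\<lambda>u. t + 1 + u * f) ` {..<K}"
  have "inj_on (\<lambda>u. t + 1 + u * f) {..<K}" using assms(1) by (intro inj_onI) simp
  then have "card ?M = K" by (simp add: card_image)
  have "?M \<subseteq> unmarked_rank T ` ?D"
  proof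
    fix m assume "m \<in> ?M"
    then obtain u where u: "u < K" "m = t + 1 + u * f" by auto
    have "u * f \<le> (K - 1) * f" using u by (intro mult_le_mono1) linarith
    then have "m \<le> unmarked_rank T n" using assms(3) u by linarith
    moreover have "1 \<le> m" using u by simp
    ultimately obtain c where c: "c \<in> {1..n} - T" "unmarked_rank T c = m"
      using unmarked_rank_surj by blast
    moreover have "(m - 1) mod f = t" using u assms(1) by simp
    ultimately have "c \<in> ?D" by simp
    then show "m \<in> unmarked_rank T ` ?D" using c(2) by blast
  qed
  then have "card ?M \<le> card (unmarked_rank T ` ?D)" by (intro card_mono) simp_all
  also have "\<dots> \<le> card ?D" by (rule card_image_le) simp
  finally show ?thesis using \<open>card ?M = K\<close> by simp
qed

lemma card_interval_diff_le:
  assumes "b - a \<le> f \<or> (b - a \<le> f + 1 \<and> x \<in> T \<inter> {a<..b})"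
  shows "card ({a<..b} - T) \<le> f"
proof (cases "b - a \<le> f")
  case True
  then show ?thesis using card_mono[of "{a<..b}" "{a<..b} - T"] by simp
next
  case False
  then have "{a<..b} - T \<subseteq> {a<..b} - {x}" "x \<in> {a<..b}" "b - a \<le> f + 1" using assms by auto
  then show ?thesis using card_mono[of "{a<..b} - {x}" "{a<..b} - T"] by simp
qed

locale cone_dims =
  fixes n1 n2 n3 :: nat
  assumes n1_ge: "3 \<le> n1" and n2_ge: "3 \<le> n2" and n1_le: "n1 \<le> n3" and n2_le: "n2 \<le> n3"
    and lower: "3 * max n1 n2 \<le> 2 * n3" and upper: "2 * n3 \<le> n1 * n2"
begin

abbreviation "q \<equiv> n3 div n1"
abbreviation "r \<equiv> n3 mod n1"
abbreviation "el \<equiv> ell n1 n3"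
abbreviation "sf \<equiv> sfirst n1 n3"
abbreviation "blk \<equiv> block_of n1 n3"
abbreviation "LS \<equiv> Lsum n1 n3"
abbreviation "cone yL yR \<equiv> left_set n1 n3 yL \<union> right_set n1 n3 yR"

lemma n1_pos: "0 < n1" using n1_ge by simp

lemmas n3_eq = mult_div_mod_eq[of n1 n3, symmetric]

lemma q_pos: "1 \<le> q"
  using div_le_mono[OF n1_le, of n1] n1_ge by simp

lemma ell_ge_q: "q \<le> el j"
  unfolding ell_def Let_def by auto

lemma ell_le_Suc_q: "el j \<le> q + 1"
  unfolding ell_def Let_def by auto

lemma ell_pos: "1 \<le> el j"
  using q_pos ell_ge_q[of j] by linarith

lemma ell_r0: "r = 0 \<Longrightarrow> el i = q"
  using ell_altdef[of n1 n3 i] by (cases i) simp_all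

lemma ell_1: "2 \<le> el 1"
proof (cases "r = 0")
  case True
  have "3 * n1 \<le> 2 * n3" using lower by simp
  moreover have "n1 * q = n3" using mult_div_mod_eq[of n1 n3] True by simp
  ultimately have "n1 * 3 \<le> n1 * (2 * q)" by linarith
  then have "2 \<le> q" using n1_ge mult_le_cancel1[of n1 3 "2 * q"] by simp
  then show ?thesis using ell_ge_q[of 1] by linarith
next
  case False
  then show ?thesis using ell_altdef[of n1 n3 1] q_pos by auto
qed

lemma ell_odd: assumes "n1 \<le> 2 * r" "odd j" "j \<le> n1" shows "el j = q + 1"
  using ell_altdef[of n1 n3 j] assms by auto

lemma ell_add_ell_pred: assumes "1 \<le> a" "a \<le> n1" shows "3 \<le> el a + el (cyc_pred n1 a)"
proof (cases "q = 1")
  case False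
  then show ?thesis
    using q_pos ell_ge_q[of a] ell_ge_q[of "cyc_pred n1 a"] by linarith
next
  case True
  then have "3 * n1 \<le> 2 * (n1 + r)" using lower n3_eq by simp
  then have r_large: "n1 \<le> 2 * r" by simp
  consider "a = 1" | "a \<noteq> 1" "odd a" | "a \<noteq> 1" "even a" by blast
  then show ?thesis
  proof cases
    case 1
    then show ?thesis using ell_1 ell_pos[of "cyc_pred n1 a"] by simp
  next
    case 2
    then show ?thesis using ell_odd[OF r_large] assms True ell_pos by simp
  next
    case 3
    then show ?thesis
      using ell_odd[OF r_large, of "a - 1"] assms True ell_pos unfolding cyc_pred_def by simp
  qed
qed

lemma sfirst_column: assumes "1 \<le> i" "i \<le> n1" shows "sf i \<in> {1..n3}" "blk (sf i) = i"
proof -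
  have "in_block n1 n3 i (sf i)" using ell_pos[of i] unfolding sfirst_def in_block_def by simp
  then show "sf i \<in> {1..n3}" "blk (sf i) = i"
    using in_block_range[OF assms] block_of_eq[OF assms] by auto
qed

lemma Suc_sfirst_column:
  assumes "1 \<le> i" "i \<le> n1" "2 \<le> el i" shows "Suc (sf i) \<in> {1..n3}" "blk (Suc (sf i)) = i"
proof -
  have "in_block n1 n3 i (Suc (sf i))" using assms(3) unfolding sfirst_def in_block_def by simp
  then show "Suc (sf i) \<in> {1..n3}" "blk (Suc (sf i)) = i"
    using in_block_range[OF assms(1,2)] block_of_eq[OF assms(1,2)] by auto
qed

lemma sf_1: "sf 1 = 1" unfolding sfirst_def Lsum_def by simp

lemma blk_1: "blk 1 = 1" and blk_2: "blk 2 = 1"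
  using sfirst_column[of 1] Suc_sfirst_column[of 1] sf_1 n1_ge ell_1 by (simp_all add: numeral_2_eq_2)

lemma blk_range: "c \<in> {1..n3} \<Longrightarrow> 1 \<le> blk c \<and> blk c \<le> n1"
  using block_of[OF n1_pos] by simp

lemma in_block_blk: "c \<in> {1..n3} \<Longrightarrow> in_block n1 n3 (blk c) c"
  using block_of[OF n1_pos] by simp

lemma same_block_bounds:
  assumes "c \<in> {1..n3}" "c' \<in> {1..n3}" "blk c = blk c'"
  shows "LS (blk c) < c" "c' \<le> LS (blk c) + el (blk c)"
  using in_block_blk[OF assms(1)] in_block_blk[OF assms(2)] assms(3) unfolding in_block_def by auto

lemma cone_eq:
  "cone yL yR = (\<lambda>c. (blk c, yL c, c)) ` {1..n3} \<union> (\<lambda>c. (cyc_succ n1 (blk c), yR c, c)) ` {1..n3}"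
  using left_set_eq_image[OF n1_pos] right_set_eq_image[OF n1_pos] by simp

lemma finite_cone: "finite (cone yL yR)"
  unfolding cone_eq by simp

lemma left_in_cone: "c \<in> {1..n3} \<Longrightarrow> (blk c, yL c, c) \<in> cone yL yR"
  unfolding cone_eq by blast

lemma right_in_cone: "c \<in> {1..n3} \<Longrightarrow> (cyc_succ n1 (blk c), yR c, c) \<in> cone yL yR"
  unfolding cone_eq by blast

lemma card_row_ge_3:
  assumes a: "1 \<le> a" "a \<le> n1" shows "3 \<le> card (Wsec (cone yL yR) 1 a)"
proof -
  define p where "p = cyc_pred n1 a"
  have p: "1 \<le> p" "p \<le> n1" "p \<noteq> a" "cyc_succ n1 p = a"
    using a n1_ge unfolding p_def cyc_pred_def cyc_succ_def by auto
  note sa = sfirst_column[OF a] and sp = sfirst_column[OF p(1,2)]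
  have "sf p \<noteq> sf a" using sa(2) sp(2) p(3) by metis
  have "3 \<le> el a + el p" using ell_add_ell_pred[OF a] unfolding p_def .
  then consider "2 \<le> el a" | "2 \<le> el p" by linarith
  then show ?thesis
  proof cases
    case 1
    note sa' = Suc_sfirst_column[OF a 1]
    have "sf p \<noteq> Suc (sf a)" using sa'(2) sp(2) p(3) by metis
    have sub: "{(blk (sf a), yL (sf a), sf a), (blk (Suc (sf a)), yL (Suc (sf a)), Suc (sf a)),
        (cyc_succ n1 (blk (sf p)), yR (sf p), sf p)} \<subseteq> cone yL yR"
      using left_in_cone[OF sa(1)] left_in_cone[OF sa'(1)] right_in_cone[OF sp(1)] by simp
    show ?thesis
      by (rule three_le_card_Wsec[OF finite_cone sub])
        (use sa(2) sa'(2) sp(2) p(4) \<open>sf p \<noteq> sf a\<close> \<open>sf p \<noteq> Suc (sf a)\<close> in simp_all)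
  next
    case 2
    note sp' = Suc_sfirst_column[OF p(1,2) 2]
    have "sf a \<noteq> Suc (sf p)" using sp'(2) sa(2) p(3) by metis
    have sub: "{(blk (sf a), yL (sf a), sf a), (cyc_succ n1 (blk (sf p)), yR (sf p), sf p),
        (cyc_succ n1 (blk (Suc (sf p))), yR (Suc (sf p)), Suc (sf p))} \<subseteq> cone yL yR"
      using left_in_cone[OF sa(1)] right_in_cone[OF sp(1)] right_in_cone[OF sp'(1)] by simp
    show ?thesis
      by (rule three_le_card_Wsec[OF finite_cone sub])
        (use sa(2) sp(2) sp'(2) p(4) \<open>sf p \<noteq> sf a\<close> \<open>sf a \<noteq> Suc (sf p)\<close> in simp_all)
  qed
qed

lemma coord1_cone_range: "w \<in> cone yL yR \<Longrightarrow> 1 \<le> coord 1 w \<and> coord 1 w \<le> n1"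
  unfolding cone_eq using blk_range cyc_succ_range by fastforce

lemma no_bad_4cycle_coneI:
  assumes rich: "\<And>w. w \<in> cone yL yR \<Longrightarrow> 3 \<le> card (Wsec (cone yL yR) 2 (coord 2 w))"
    and same_block: "\<And>c c'. c \<in> {1..n3} \<Longrightarrow> c' \<in> {1..n3} \<Longrightarrow> c \<noteq> c' \<Longrightarrow> blk c = blk c' \<Longrightarrow>
      yL c \<noteq> yL c' \<and> yR c \<noteq> yR c'"
    and next_block: "\<And>c c'. c \<in> {1..n3} \<Longrightarrow> c' \<in> {1..n3} \<Longrightarrow> blk c = cyc_succ n1 (blk c') \<Longrightarrow>
      yR c \<noteq> yL c'"
  shows "\<not> has_bad_4cycle (cone yL yR)"
proof -
  have "3 \<le> card (Wsec (cone yL yR) i (coord i w))" if "w \<in> cone yL yR" "i \<in> {1, 2}" for w i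
  proof -
    have "3 \<le> card (Wsec (cone yL yR) 1 (coord 1 w))"
      using card_row_ge_3 coord1_cone_range[OF that(1)] by blast
    then show ?thesis using rich[OF that(1)] that(2) by blast
  qed
  moreover have "blk c = blk c'"
    if "c \<in> {1..n3}" "c' \<in> {1..n3}" "cyc_succ n1 (blk c) = cyc_succ n1 (blk c')" for c c'
    using cyc_succ_inj[of "blk c" n1 "blk c'"] blk_range[OF that(1)] blk_range[OF that(2)] that(3)
    by simp
  ultimately show ?thesis
    using same_block next_block
    by (intro no_bad_4cycle_column_pairs[where C = "{1..n3}" and b = blk and nx = "cyc_succ n1",
          folded cone_eq]) blast+
qed

lemma card_left_values_ge:
  assumes "D \<subseteq> {1..n3}" "\<And>c. c \<in> D \<Longrightarrow> yL c = v"
  shows "card D \<le> card (Wsec (cone yL yR) 2 v)"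
proof (rule card_inj_on_le)
  show "inj_on (\<lambda>c. (blk c, yL c, c)) D" by (rule inj_onI) simp
  show "(\<lambda>c. (blk c, yL c, c)) ` D \<subseteq> Wsec (cone yL yR) 2 v"
  proof (rule image_subsetI)
    fix c assume "c \<in> D"
    then have "(blk c, yL c, c) \<in> cone yL yR" using assms(1) by (intro left_in_cone) blast
    then show "(blk c, yL c, c) \<in> Wsec (cone yL yR) 2 v"
      using assms(2)[OF \<open>c \<in> D\<close>] unfolding Wsec_def by simp
  qed
  show "finite (Wsec (cone yL yR) 2 v)" using finite_cone unfolding Wsec_def by simp
qed

lemma card_right_values_ge:
  assumes "D \<subseteq> {1..n3}" "\<And>c. c \<in> D \<Longrightarrow> yR c = v"
  shows "card D \<le> card (Wsec (cone yL yR) 2 v)"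
proof (rule card_inj_on_le)
  show "inj_on (\<lambda>c. (cyc_succ n1 (blk c), yR c, c)) D" by (rule inj_onI) simp
  show "(\<lambda>c. (cyc_succ n1 (blk c), yR c, c)) ` D \<subseteq> Wsec (cone yL yR) 2 v"
  proof (rule image_subsetI)
    fix c assume "c \<in> D"
    then have "(cyc_succ n1 (blk c), yR c, c) \<in> cone yL yR" using assms(1) by (intro right_in_cone) blast
    then show "(cyc_succ n1 (blk c), yR c, c) \<in> Wsec (cone yL yR) 2 v"
      using assms(2)[OF \<open>c \<in> D\<close>] unfolding Wsec_def by simp
  qed
  show "finite (Wsec (cone yL yR) 2 v)" using finite_cone unfolding Wsec_def by simp
qed

lemma cone_cases:
  assumes "w \<in> cone yL yR"
  obtains c where "c \<in> {1..n3}" "w = (blk c, yL c, c)"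
    | c where "c \<in> {1..n3}" "w = (cyc_succ n1 (blk c), yR c, c)"
  using assms unfolding cone_eq by blast

end

subsection \<open>Even \<open>n\<^sub>2\<close>\<close>

locale cone_dims_even = cone_dims + assumes even_n2: "even n2"
begin

abbreviation "h \<equiv> n2 div 2"

lemma n2_eq: "n2 = 2 * h" using even_n2 by simp

lemma ell_le_h: "el i \<le> h"
proof -
  have "2 * n3 \<le> 2 * (n1 * h)" using upper n2_eq by (simp add: ac_simps)
  then have "n3 \<le> n1 * h" by simp
  then have "n1 * q \<le> n1 * h" using n3_eq by linarith
  then have "q \<le> h" using n1_pos by simp
  show ?thesis
  proof (cases "r = 0")
    case True
    then show ?thesis using \<open>q \<le> h\<close> ell_r0 by simp
  next
    case False
    then have "n1 * q < n1 * h" using \<open>n3 \<le> n1 * h\<close> n3_eq by linarith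
    then show ?thesis using ell_le_Suc_q[of i] by simp
  qed
qed

lemma yL_even_same_block:
  assumes "c \<in> {1..n3}" "c' \<in> {1..n3}" "c < c'" "blk c = blk c'"
  shows "yL_even n2 c \<noteq> yL_even n2 c'"
proof
  have "c' - 1 < c - 1 + h"
    using same_block_bounds[OF assms(1,2,4)] ell_le_h[of "blk c"] assms(2) by auto
  moreover assume "yL_even n2 c = yL_even n2 c'"
  ultimately have "c - 1 = c' - 1"
    using mod_eq_close_imp_eq[of "c - 1" "c' - 1" h] assms(3) unfolding yL_even_def by simp
  then show False using assms(1,3) by auto
qed

lemma even_same_block:
  assumes "c \<in> {1..n3}" "c' \<in> {1..n3}" "c \<noteq> c'" "blk c = blk c'"
  shows "yL_even n2 c \<noteq> yL_even n2 c' \<and> yR_even n2 c \<noteq> yR_even n2 c'"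
  using yL_even_same_block[of c c'] yL_even_same_block[of c' c] assms
  unfolding yL_even_def yR_even_def by (cases "c < c'") auto

lemma even_next_block: "yR_even n2 c \<noteq> yL_even n2 c'"
proof -
  have "0 < h" using n2_ge n2_eq by simp
  then have "yL_even n2 c' \<le> h" unfolding yL_even_def by (simp add: Suc_leI)
  then show ?thesis unfolding yR_even_def by simp
qed

lemma even_values_rich:
  assumes "w \<in> cone (yL_even n2) (yR_even n2)"
  shows "3 \<le> card (Wsec (cone (yL_even n2) (yR_even n2)) 2 (coord 2 w))"
proof -
  have h: "2 \<le> h" "3 * h \<le> n3" using n2_ge lower n2_eq by linarith+
  obtain c where w: "w = (blk c, yL_even n2 c, c) \<or> w = (cyc_succ n1 (blk c), yR_even n2 c, c)"
    using cone_cases[OF assms] by metis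
  define t where "t = (c - 1) mod h"
  have "t < h" unfolding t_def using h by simp
  then have cols: "{t + 1, t + 1 + h, t + 1 + 2 * h} \<subseteq> {1..n3}"
    "card {t + 1, t + 1 + h, t + 1 + 2 * h} = 3"
    using h by auto
  have "yL_even n2 (t + 1 + u * h) = yL_even n2 c \<and> yR_even n2 (t + 1 + u * h) = yR_even n2 c" for u
    using \<open>t < h\<close> unfolding t_def yL_even_def yR_even_def by simp
  from this[of 0] this[of 1] this[of 2]
  have vals: "yL_even n2 c' = yL_even n2 c" "yR_even n2 c' = yR_even n2 c"
    if "c' \<in> {t + 1, t + 1 + h, t + 1 + 2 * h}" for c'
    using that by auto
  show ?thesis
    using w card_left_values_ge[OF cols(1) vals(1)] card_right_values_ge[OF cols(1) vals(2)] cols(2)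
    by auto
qed

lemma no_bad_4cycle_even:
  "\<not> has_bad_4cycle (left_set n1 n3 (yL_even n2) \<union> right_set n1 n3 (yR_even n2))"
  using even_values_rich even_same_block even_next_block by (rule no_bad_4cycle_coneI)

lemma no_bad_4cycle_middle_cone_even: "W \<in> middle_cone n1 n2 n3 \<Longrightarrow> \<not> has_bad_4cycle W"
  using even_n2 no_bad_4cycle_even unfolding middle_cone_def by simp

end

subsection \<open>Odd \<open>n\<^sub>2\<close>\<close>

locale cone_dims_odd = cone_dims + assumes odd_n2: "odd n2"
begin

abbreviation "f \<equiv> fpar n2"
abbreviation "S \<equiv> Sset n1 n2 n3"
abbreviation "k \<equiv> kcount n1 n2 n3"
abbreviation "long \<equiv> {i \<in> {1..n1}. f < el i}"
abbreviation "yR \<equiv> yR_odd n1 n2 n3"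

lemma n2_eq: "n2 = 2 * f + 1" using odd_n2 unfolding fpar_def by simp

lemma f_pos: "1 \<le> f" using n2_ge n2_eq by linarith

lemma n3_ge: "3 * f + 2 \<le> n3" using lower n2_eq by simp

lemma q_le_f: "q \<le> f"
proof (rule ccontr)
  assume "\<not> q \<le> f"
  then have "n1 * (2 * f + 2) \<le> n1 * (2 * q)" by (intro mult_le_mono2) simp
  moreover have "n1 * q \<le> n3" using n3_eq by linarith
  moreover have "2 * n3 \<le> n1 * (2 * f + 1)" using upper n2_eq by simp
  ultimately have "n1 * (2 * f + 2) \<le> n1 * (2 * f + 1)" by linarith
  then show False using n1_pos by simp
qed

lemma long_ell:
  assumes "f < el i" shows "el i = f + 1" "q = f" "0 < r" "2 * r \<le> n1"
proof -
  show e: "el i = f + 1" "q = f" using ell_ge_q[of i] ell_le_Suc_q[of i] q_le_f assms by linarith+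
  show "0 < r" using ell_r0[of i] e by (cases "r = 0") simp_all
  have "2 * (n1 * f + r) \<le> n1 * (2 * f + 1)" using upper n2_eq n3_eq e(2) by simp
  then show "2 * r \<le> n1" by (simp add: algebra_simps)
qed

lemma long_iff: assumes "f < el i" shows "f < el j \<longleftrightarrow> j \<le> 2 * r \<and> odd j"
proof -
  have "r \<le> n1 - r" using long_ell(4)[OF assms] by linarith
  then show ?thesis using ell_altdef[of n1 n3 j] long_ell(2)[OF assms] by simp
qed

lemma long_not_adjacent:
  assumes "1 \<le> i" "i \<le> n1" "f < el i" "f < el (cyc_succ n1 i)" shows False
proof -
  have "i \<le> 2 * r" "odd i" "odd (cyc_succ n1 i)"
    using long_iff[OF assms(3)] assms(3,4) by auto
  moreover have "2 * r \<le> n1" using long_ell(4)[OF assms(3)] .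
  ultimately show False
  proof (cases "i = n1")
    case True
    then have "i = 2 * r" using \<open>i \<le> 2 * r\<close> \<open>2 * r \<le> n1\<close> by simp
    then show False using \<open>odd i\<close> by simp
  qed (simp add: cyc_succ_def)
qed

lemma long_1: assumes "f < el i" shows "f < el 1"
  using long_iff[OF assms, of 1] long_ell(3)[OF assms] by simp

lemma sfirst_long_in_S: assumes "i \<in> long" shows "sf i \<in> S"
proof (cases "2 \<le> k")
  case True
  then show ?thesis unfolding Sset_def using assms by auto
next
  case False
  have "i = 1"
  proof (rule ccontr)
    assume "i \<noteq> 1"
    have "{1, i} \<subseteq> long" using assms long_1 n1_ge by auto
    then have "card {1, i} \<le> k" unfolding kcount_def by (intro card_mono) auto
    then show False using False \<open>i \<noteq> 1\<close> by simp
  qed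
  then show ?thesis using False unfolding Sset_def sfirst_def Lsum_def by simp
qed

lemma S_small: "k < 2 \<Longrightarrow> S = {1}"
  unfolding Sset_def by simp

lemma S_large: "2 \<le> k \<Longrightarrow> S = sf ` long"
  unfolding Sset_def by auto

lemma S_elem:
  assumes "c \<in> S" obtains i where "i \<in> {1..n1}" "c = sf i" "2 \<le> el i" "2 \<le> k \<Longrightarrow> f < el i"
proof (cases "2 \<le> k")
  case True
  then show ?thesis using that assms S_large f_pos by fastforce
next
  case False
  then show ?thesis using that[of 1] assms S_small sf_1 ell_1 n1_ge by simp
qed

lemma finite_S: "finite S"
  by (cases "2 \<le> k") (simp_all add: S_large S_small)

lemma card_S_le: "card S \<le> max 1 k"
  by (cases "2 \<le> k") (simp_all add: S_large S_small kcount_def card_image_le)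

lemma n3_ge_long: assumes "2 \<le> k" shows "n1 * f + k \<le> n3"
proof -
  have "long \<noteq> {}" using assms unfolding kcount_def by (metis card.empty not_numeral_le_zero)
  then obtain i where "i \<in> long" by blast
  then have "q = f" using long_ell(2) by blast
  then have "f + of_bool (j \<in> long) \<le> el j" if "j \<in> {1..n1}" for j
    using that ell_ge_q[of j] by (cases "f < el j") simp_all
  then have "(\<Sum>j\<in>{1..n1}. f + of_bool (j \<in> long)) \<le> (\<Sum>j\<in>{1..n1}. el j)"
    by (rule sum_mono)
  also have "\<dots> = n3"
    using Lsum_total[OF n1_pos, of n3] unfolding Lsum_def by (simp add: atLeastLessThanSuc_atLeastAtMost)
  finally show ?thesis unfolding kcount_def by (simp add: sum.distrib Int_def)
qed

lemma n3_minus_card_S: "3 * f \<le> n3 - card S" "k < 2 \<Longrightarrow> 3 * f + 1 \<le> n3 - card S"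
proof -
  show "3 * f + 1 \<le> n3 - card S" if "k < 2" using that S_small n3_ge by simp
  show "3 * f \<le> n3 - card S"
  proof (cases "2 \<le> k")
    case True
    then have "card S \<le> k" using card_S_le by simp
    moreover have "3 * f \<le> n1 * f" using n1_ge by simp
    ultimately show ?thesis using n3_ge_long[OF True] by linarith
  next
    case False
    then show ?thesis using S_small n3_ge by simp
  qed
qed

lemma rank_ge_3f: "finite T \<Longrightarrow> card T \<le> card S \<Longrightarrow> 3 * f \<le> unmarked_rank T n3"
  using unmarked_rank_ge[of T n3] n3_minus_card_S(1) by linarith

lemma rank_S_ge_small: "k < 2 \<Longrightarrow> 3 * f + 1 \<le> unmarked_rank S n3"
  using unmarked_rank_ge[OF finite_S, of n3] n3_minus_card_S(2) by linarith

lemma card_block_unmarked_le: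
  assumes "1 \<le> i" "i \<le> n1"
  shows "card ({LS i<..LS i + el i} - S) \<le> f" "card ({LS i<..LS i + el i} - Suc ` S) \<le> f"
proof -
  have "el i \<le> f + 1" using ell_le_Suc_q[of i] q_le_f by simp
  moreover have "f < el i \<Longrightarrow> sf i \<in> S" using sfirst_long_in_S assms by simp
  ultimately have "el i \<le> f \<or> (el i \<le> f + 1 \<and> sf i \<in> S \<inter> {LS i<..LS i + el i})"
    "el i \<le> f \<or> (el i \<le> f + 1 \<and> Suc (sf i) \<in> Suc ` S \<inter> {LS i<..LS i + el i})"
    using f_pos unfolding sfirst_def by auto
  then show "card ({LS i<..LS i + el i} - S) \<le> f" "card ({LS i<..LS i + el i} - Suc ` S) \<le> f"
    using card_interval_diff_le[of "LS i + el i" "LS i" f] by simp_all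
qed

lemma yL_odd_eq: "yL_odd n1 n2 n3 c = (if c \<in> S then n2 else (unmarked_rank S c - 1) mod f + 1)"
  unfolding yL_odd_def fill_odd_eq by simp

lemma yR_eq: "yR c = (if c \<in> Suc ` S then n2 else f + (unmarked_rank (Suc ` S) c - 1) mod f + 1)"
  unfolding yR_odd_def fill_odd_eq by simp

end

text \<open>\<open>Z\<close> is the set of left columns whose value is moved to \<open>n\<^sub>2\<close> by the final modification:
  empty if \<open>k \<ge> 2\<close>, a single column otherwise.\<close>
locale cone_dims_odd_mod = cone_dims_odd +
  fixes Z :: "nat set"
  assumes Z_cases: "(2 \<le> k \<and> Z = {}) \<or> (k < 2 \<and> (\<exists>z. Z = {z} \<and> z \<in> {1..n3} \<and>
    blk z \<noteq> 1 \<and> blk z \<noteq> n1 \<and> yL_odd n1 n2 n3 z = 1))"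
begin

definition yLZ :: "nat \<Rightarrow> nat" where
  "yLZ c = (if c \<in> Z then n2 else yL_odd n1 n2 n3 c)"

lemma yLZ_special: "c \<in> S \<union> Z \<Longrightarrow> yLZ c = n2"
  unfolding yLZ_def yL_odd_eq by auto

lemma yLZ_regular: "c \<notin> S \<union> Z \<Longrightarrow> yLZ c = (unmarked_rank S c - 1) mod f + 1"
  unfolding yLZ_def yL_odd_eq by auto

lemma yLZ_regular_le: "c \<notin> S \<union> Z \<Longrightarrow> yLZ c \<le> f"
  using yLZ_regular f_pos by (simp add: Suc_leI)

lemma yR_regular: "c \<notin> Suc ` S \<Longrightarrow> f < yR c \<and> yR c \<le> 2 * f"
  unfolding yR_eq using f_pos by (simp add: Suc_leI)

lemma Z_elem:
  "z \<in> Z \<Longrightarrow> k < 2 \<and> Z = {z} \<and> z \<in> {1..n3} \<and> blk z \<noteq> 1 \<and> blk z \<noteq> n1 \<and> yL_odd n1 n2 n3 z = 1"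
  using Z_cases by auto

lemma left_special_unique:
  assumes "c \<in> S \<union> Z" "c' \<in> S \<union> Z" "blk c = blk c'" shows "c = c'"
proof -
  have S_unique: "c = c'" if "c \<in> S" "c' \<in> S" "blk c = blk c'" for c c'
    using that by (metis S_elem atLeastAtMost_iff sfirst_column(2))
  have Z_unique: "c = c'" if "c \<in> Z" "c' \<in> S \<union> Z" "blk c = blk c'" for c c'
    using that Z_elem[OF that(1)] S_small blk_1 by auto
  show ?thesis using assms S_unique[of c c'] Z_unique[of c c'] Z_unique[of c' c] by auto
qed

lemma right_special_unique:
  assumes "c \<in> Suc ` S" "c' \<in> Suc ` S" "blk c = blk c'" shows "c = c'"
  using assms by (metis S_elem atLeastAtMost_iff image_iff Suc_sfirst_column(2))

lemma odd_left_same_block: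
  assumes "c \<in> {1..n3}" "c' \<in> {1..n3}" "c < c'" "blk c = blk c'"
  shows "yLZ c \<noteq> yLZ c'"
proof -
  define i where "i = blk c"
  have i: "1 \<le> i" "i \<le> n1" using blk_range[OF assms(1)] unfolding i_def by auto
  have block: "LS i < c" "c' \<le> LS i + el i"
    using same_block_bounds[OF assms(1,2,4)] unfolding i_def by auto
  consider "c \<in> S \<union> Z" "c' \<in> S \<union> Z" | "(c \<in> S \<union> Z) \<noteq> (c' \<in> S \<union> Z)" | "c \<notin> S \<union> Z" "c' \<notin> S \<union> Z"
    by blast
  then show ?thesis
  proof cases
    case 1
    then show ?thesis using left_special_unique assms(3,4) by fastforce
  next
    case 2
    then show ?thesis
      using yLZ_special[of c] yLZ_special[of c'] yLZ_regular_le[of c] yLZ_regular_le[of c'] n2_eq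
      by (cases "c \<in> S \<union> Z") auto
  next
    case 3
    then have "(unmarked_rank S c - 1) mod f \<noteq> (unmarked_rank S c' - 1) mod f"
      using unmarked_rank_mod_neq[OF block(1) assms(3) block(2)] card_block_unmarked_le(1)[OF i]
      by blast
    then show ?thesis using yLZ_regular 3 by simp
  qed
qed

lemma odd_right_same_block:
  assumes "c \<in> {1..n3}" "c' \<in> {1..n3}" "c < c'" "blk c = blk c'"
  shows "yR c \<noteq> yR c'"
proof -
  define i where "i = blk c"
  have i: "1 \<le> i" "i \<le> n1" using blk_range[OF assms(1)] unfolding i_def by auto
  have block: "LS i < c" "c' \<le> LS i + el i"
    using same_block_bounds[OF assms(1,2,4)] unfolding i_def by auto
  consider "c \<in> Suc ` S" "c' \<in> Suc ` S" | "(c \<in> Suc ` S) \<noteq> (c' \<in> Suc ` S)"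
    | "c \<notin> Suc ` S" "c' \<notin> Suc ` S"
    by blast
  then show ?thesis
  proof cases
    case 1
    then show ?thesis using right_special_unique assms(3,4) by fastforce
  next
    case 2
    then show ?thesis
      using yR_regular[of c] yR_regular[of c'] yR_eq[of c] yR_eq[of c'] n2_eq
      by (cases "c \<in> Suc ` S") auto
  next
    case 3
    then have "(unmarked_rank (Suc ` S) c - 1) mod f \<noteq> (unmarked_rank (Suc ` S) c' - 1) mod f"
      using unmarked_rank_mod_neq[OF block(1) assms(3) block(2)] card_block_unmarked_le(2)[OF i]
      by blast
    then show ?thesis using yR_eq 3 by simp
  qed
qed

lemma odd_next_block:
  assumes "c \<in> {1..n3}" "c' \<in> {1..n3}" "blk c = cyc_succ n1 (blk c')"
  shows "yR c \<noteq> yLZ c'"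
proof
  assume eq: "yR c = yLZ c'"
  have "c \<in> Suc ` S"
    using eq yR_regular[of c] yLZ_special[of c'] yLZ_regular_le[of c'] n2_eq
    by (cases "c' \<in> S \<union> Z") auto
  then obtain s where s: "s \<in> S" "c = Suc s" by blast
  have c': "c' \<in> S \<union> Z" using eq yR_eq[of c] \<open>c \<in> Suc ` S\<close> yLZ_regular_le[of c'] n2_eq by auto
  have b': "1 \<le> blk c'" "blk c' \<le> n1" using blk_range[OF assms(2)] by auto
  show False
  proof (cases "2 \<le> k")
    case True
    then have "c' \<in> S" using c' Z_elem by auto
    obtain i where i: "i \<in> {1..n1}" "s = sf i" "2 \<le> el i" "f < el i" using S_elem[OF s(1)] True by metis
    obtain j where j: "j \<in> {1..n1}" "c' = sf j" "f < el j" using S_elem[OF \<open>c' \<in> S\<close>] True by metis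
    have "blk c = i" "blk c' = j" using Suc_sfirst_column[of i] sfirst_column[of j] i j s(2) by auto
    then show False using long_not_adjacent[of j] i j assms(3) by auto
  next
    case False
    then have "c = 2" using s S_small by simp
    then have "cyc_succ n1 (blk c') = 1" using assms(3) blk_2 by simp
    then have "blk c' = n1" using b' n1_ge unfolding cyc_succ_def by (cases "blk c' = n1") auto
    then show False using c' S_small False blk_1 n1_ge Z_elem by auto
  qed
qed

lemma card_n2_ge: "3 \<le> card (Wsec (cone yLZ yR) 2 n2)"
proof (cases "2 \<le> k")
  case True
  then have "\<not> (\<forall>i\<in>long. \<forall>j\<in>long. i = j)"
    using card_le_Suc0_iff_eq[of long] unfolding kcount_def by simp
  then obtain i j where ij: "i \<in> long" "j \<in> long" "i \<noteq> j" by blast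
  have i: "1 \<le> i" "i \<le> n1" "2 \<le> el i" and j: "1 \<le> j" "j \<le> n1"
    using ij(1,2) f_pos by auto
  note si = sfirst_column[OF i(1,2)] and si' = Suc_sfirst_column[OF i] and sj = sfirst_column[OF j]
  have "sf i \<noteq> sf j" "Suc (sf i) \<noteq> sf j" using si(2) si'(2) sj(2) ij(3) by metis+
  have "sf i \<in> S" "sf j \<in> S" using sfirst_long_in_S ij by auto
  then have vals: "yLZ (sf i) = n2" "yLZ (sf j) = n2" "yR (Suc (sf i)) = n2"
    using yLZ_special yR_eq by auto
  show ?thesis
  proof (rule three_le_card_Wsec[OF finite_cone])
    show "{(blk (sf i), yLZ (sf i), sf i), (blk (sf j), yLZ (sf j), sf j),
        (cyc_succ n1 (blk (Suc (sf i))), yR (Suc (sf i)), Suc (sf i))} \<subseteq> cone yLZ yR"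
      using left_in_cone[OF si(1)] left_in_cone[OF sj(1)] right_in_cone[OF si'(1)] by simp
  qed (use vals \<open>sf i \<noteq> sf j\<close> \<open>Suc (sf i) \<noteq> sf j\<close> in simp_all)
next
  case False
  then obtain z where z: "Z = {z}" "z \<in> {1..n3}" "blk z \<noteq> 1" using Z_cases by auto
  have "1 \<in> S" "2 \<in> Suc ` S" using S_small False by auto
  then have vals: "yLZ 1 = n2" "yLZ z = n2" "yR 2 = n2" using yLZ_special yR_eq z(1) by auto
  have cols: "1 \<in> {1..n3}" "2 \<in> {1..n3}" using n1_ge n1_le by auto
  have "z \<noteq> 1" "z \<noteq> 2" using z blk_1 blk_2 by auto
  show ?thesis
  proof (rule three_le_card_Wsec[OF finite_cone])
    show "{(blk 1, yLZ 1, 1), (blk z, yLZ z, z), (cyc_succ n1 (blk 2), yR 2, 2)} \<subseteq> cone yLZ yR"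
      using left_in_cone[OF cols(1)] left_in_cone[OF z(2)] right_in_cone[OF cols(2)] by simp
  qed (use vals \<open>z \<noteq> 1\<close> \<open>z \<noteq> 2\<close> in simp_all)
qed

lemma card_left_regular_ge:
  assumes "c \<in> {1..n3}" "c \<notin> S \<union> Z"
  shows "3 \<le> card (Wsec (cone yLZ yR) 2 (yLZ c))"
proof -
  define t where "t = (unmarked_rank S c - 1) mod f"
  have "t < f" unfolding t_def using f_pos by simp
  define D where "D = {c' \<in> {1..n3} - S. (unmarked_rank S c' - 1) mod f = t}"
  have vals: "yLZ c' = yLZ c" if "c' \<in> D - Z" for c'
    using that yLZ_regular assms(2) unfolding D_def t_def by auto
  have "3 \<le> card (D - Z)"
  proof (cases "D \<inter> Z = {}")
    case True
    have "t + 1 + (3 - 1) * f \<le> unmarked_rank S n3" using rank_ge_3f[OF finite_S] \<open>t < f\<close> by simp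
    then have "3 \<le> card D" unfolding D_def using card_unmarked_class_ge[OF \<open>t < f\<close>] by simp
    then show ?thesis using True by (simp add: Diff_triv)
  next
    case False
    then obtain z where z: "z \<in> D" "z \<in> Z" by blast
    note z_props = Z_elem[OF z(2)]
    \<comment> \<open>the moved column had value 1, so only the class of value 1 loses a column\<close>
    have "t = 0" using z(1) z_props yL_odd_eq[of z] unfolding D_def by simp
    have "0 + 1 + (4 - 1) * f \<le> unmarked_rank S n3" using rank_S_ge_small z_props by simp
    then have "4 \<le> card D"
      unfolding D_def using card_unmarked_class_ge[of 0 f 4] f_pos \<open>t = 0\<close> by simp
    then show ?thesis using z z_props unfolding D_def by simp
  qed
  also have "card (D - Z) \<le> card (Wsec (cone yLZ yR) 2 (yLZ c))"
    using vals unfolding D_def by (intro card_left_values_ge) auto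
  finally show ?thesis .
qed

lemma card_right_regular_ge:
  assumes "c \<in> {1..n3}" "c \<notin> Suc ` S"
  shows "3 \<le> card (Wsec (cone yLZ yR) 2 (yR c))"
proof -
  define t where "t = (unmarked_rank (Suc ` S) c - 1) mod f"
  have "t < f" unfolding t_def using f_pos by simp
  define D where "D = {c' \<in> {1..n3} - Suc ` S. (unmarked_rank (Suc ` S) c' - 1) mod f = t}"
  have "card (Suc ` S) \<le> card S" by (rule card_image_le[OF finite_S])
  then have "t + 1 + (3 - 1) * f \<le> unmarked_rank (Suc ` S) n3"
    using rank_ge_3f[of "Suc ` S"] finite_S \<open>t < f\<close> by simp
  then have "3 \<le> card D" unfolding D_def using card_unmarked_class_ge[OF \<open>t < f\<close>] by simp
  also have "card D \<le> card (Wsec (cone yLZ yR) 2 (yR c))"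
    using assms(2) yR_eq unfolding D_def t_def by (intro card_right_values_ge) auto
  finally show ?thesis .
qed

lemma odd_values_rich:
  assumes "w \<in> cone yLZ yR" shows "3 \<le> card (Wsec (cone yLZ yR) 2 (coord 2 w))"
  using assms
proof (cases rule: cone_cases)
  case (1 c)
  then show ?thesis
    using card_n2_ge card_left_regular_ge yLZ_special by (cases "c \<in> S \<union> Z") auto
next
  case (2 c)
  then show ?thesis
    using card_n2_ge card_right_regular_ge yR_eq by (cases "c \<in> Suc ` S") auto
qed

lemma no_bad_4cycle_odd: "\<not> has_bad_4cycle (left_set n1 n3 yLZ \<union> right_set n1 n3 yR)"
proof (rule no_bad_4cycle_coneI)
  fix c c' assume "c \<in> {1..n3}" "c' \<in> {1..n3}" "c \<noteq> c'" "blk c = blk c'"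
  then show "yLZ c \<noteq> yLZ c' \<and> yR c \<noteq> yR c'"
    using odd_left_same_block odd_right_same_block by (metis linorder_neqE_nat)
qed (use odd_values_rich odd_next_block in auto)

end

context cone_dims_odd
begin

lemma no_bad_4cycle_middle_cone_odd:
  assumes "W \<in> middle_cone n1 n2 n3" shows "\<not> has_bad_4cycle W"
proof (cases "2 \<le> k")
  case True
  interpret cone_dims_odd_mod n1 n2 n3 "{}" using True by unfold_locales simp
  have "yLZ = yL_odd n1 n2 n3" unfolding yLZ_def by simp
  then show ?thesis using assms odd_n2 True no_bad_4cycle_odd unfolding middle_cone_def by simp
next
  case False
  then obtain x z where W: "W = insert (x, n2, z) (left_set n1 n3 (yL_odd n1 n2 n3) - {(x, 1, z)})
      \<union> right_set n1 n3 (yR_odd n1 n2 n3)"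
    and xz: "(x, 1, z) \<in> left_set n1 n3 (yL_odd n1 n2 n3)" "x \<notin> {1, 2, n1}"
    using assms odd_n2 unfolding middle_cone_def by (simp only: if_False) blast
  then have "z \<in> {1..n3}" "blk z = x" "yL_odd n1 n2 n3 z = 1"
    unfolding left_set_eq_image[OF n1_pos] by auto
  then interpret cone_dims_odd_mod n1 n2 n3 "{z}"
    using False xz(2) by unfold_locales auto
  have "W = left_set n1 n3 ((yL_odd n1 n2 n3)(z := n2)) \<union> right_set n1 n3 yR"
    unfolding W left_set_fun_upd[OF n1_pos xz(1)] ..
  moreover have "yLZ = (yL_odd n1 n2 n3)(z := n2)" unfolding yLZ_def by auto
  ultimately show ?thesis using no_bad_4cycle_odd by simp
qed

end

theorem mainTheorem8:
  fixes n1 n2 n3 :: nat and W :: "vertex set"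
  assumes "3 \<le> n1" and "3 \<le> n2" and "n1 \<le> n3" and "n2 \<le> n3"
    and "3 * max n1 n2 \<le> 2 * n3" and "2 * n3 \<le> n1 * n2"
    and "W \<in> middle_cone n1 n2 n3"
  shows "\<not> has_bad_4cycle W"
proof -
  interpret cone_dims n1 n2 n3 using assms(1-6) by unfold_locales
  show ?thesis
  proof (cases "even n2")
    case True
    interpret cone_dims_even n1 n2 n3 using True by unfold_locales
    show ?thesis using assms(7) by (rule no_bad_4cycle_middle_cone_even)
  next
    case False
    interpret cone_dims_odd n1 n2 n3 using False by unfold_locales
    show ?thesis using assms(7) by (rule no_bad_4cycle_middle_cone_odd)
  qed
qed

end
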